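(* Let $A$ be a C*-algebra and $V$ an Abelian annihilator of $A$. Then (a) $\mathcal{P}_V$ is a Boolean algebra; (b) each Abelian annihilator of $A$ is modular.
   Context: For a C*-algebra $B$ and $S\subseteq B$, $\mathrm{Ann}_B(S)=\{a\in B: as+sa=0\ \forall s\in S\}$, and $\mathcal{P}_B=\{V\subseteq B: V=\mathrm{Ann}_B(\mathrm{Ann}_B(S)) \text{ for some } S\subseteq B_+\}$ (ordered by inclusion) is the set of annihilators of $B$. An annihilator $V\in\mathcal{P}_A$ is Abelian if it is a commutative C*-subalgebra of $A$. For $V\in\mathcal{P}_A$ (a C*-subalgebra), $\mathcal{P}_V$ is the set of annihilators computed inside $V$; $V$ is modular if $\mathcal{P}_V$ is a modular lattice. *)

theory Defs
  imports "HOL-Analysis.Analysis"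
begin

class cstar_algebra = banach + real_normed_algebra +
  fixes cscale :: "complex \<Rightarrow> 'a \<Rightarrow> 'a"
    and adj :: "'a \<Rightarrow> 'a"
  assumes cscale_of_real: "cscale (complex_of_real r) x = scaleR r x"
    and cscale_add_left: "cscale (a + b) x = cscale a x + cscale b x"
    and cscale_add_right: "cscale a (x + y) = cscale a x + cscale a y"
    and cscale_cscale: "cscale a (cscale b x) = cscale (a * b) x"
    and cscale_one: "cscale 1 x = x"
    and norm_cscale: "norm (cscale a x) = cmod a * norm x"
    and cscale_mult_left: "cscale a (x * y) = cscale a x * y"
    and cscale_mult_right: "cscale a (x * y) = x * cscale a y"
    and adj_adj: "adj (adj x) = x"
    and adj_add: "adj (x + y) = adj x + adj y"
    and adj_cscale: "adj (cscale a x) = cscale (cnj a) (adj x)"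
    and adj_mult: "adj (x * y) = adj y * adj x"
    and cstar_identity: "norm (adj x * x) = (norm x)\<^sup>2"

definition cstar_subalgebra :: "'a::cstar_algebra set \<Rightarrow> bool" where
  "cstar_subalgebra B \<longleftrightarrow>
     0 \<in> B \<and> (\<forall>x\<in>B. \<forall>y\<in>B. x + y \<in> B \<and> x * y \<in> B)
     \<and> (\<forall>a. \<forall>x\<in>B. cscale a x \<in> B) \<and> (\<forall>x\<in>B. adj x \<in> B) \<and> closed B"

text \<open>Positive elements of a C*-subalgebra B: the elements of the form b* b with b in B.\<close>
definition pos_part :: "'a::cstar_algebra set \<Rightarrow> 'a set" where
  "pos_part B = {adj b * b | b. b \<in> B}"

definition Ann :: "'a::cstar_algebra set \<Rightarrow> 'a set \<Rightarrow> 'a set" where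
  "Ann B S = {a \<in> B. \<forall>s\<in>S. a * s + s * a = 0}"

definition annihilators :: "'a::cstar_algebra set \<Rightarrow> 'a set set" where
  "annihilators B = {V. \<exists>S. S \<subseteq> pos_part B \<and> V = Ann B (Ann B S)}"

definition abelian_annihilator :: "'a::cstar_algebra set \<Rightarrow> bool" where
  "abelian_annihilator V \<longleftrightarrow> V \<in> annihilators UNIV \<and> cstar_subalgebra V
     \<and> (\<forall>x\<in>V. \<forall>y\<in>V. x * y = y * x)"

definition is_lub_in :: "'b set set \<Rightarrow> 'b set \<Rightarrow> 'b set \<Rightarrow> 'b set \<Rightarrow> bool" where
  "is_lub_in L x y z \<longleftrightarrow> z \<in> L \<and> x \<subseteq> z \<and> y \<subseteq> z \<and> (\<forall>w\<in>L. x \<subseteq> w \<and> y \<subseteq> w \<longrightarrow> z \<subseteq> w)"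

definition is_glb_in :: "'b set set \<Rightarrow> 'b set \<Rightarrow> 'b set \<Rightarrow> 'b set \<Rightarrow> bool" where
  "is_glb_in L x y z \<longleftrightarrow> z \<in> L \<and> z \<subseteq> x \<and> z \<subseteq> y \<and> (\<forall>w\<in>L. w \<subseteq> x \<and> w \<subseteq> y \<longrightarrow> w \<subseteq> z)"

definition join_in :: "'b set set \<Rightarrow> 'b set \<Rightarrow> 'b set \<Rightarrow> 'b set" where
  "join_in L x y = (THE z. is_lub_in L x y z)"

definition meet_in :: "'b set set \<Rightarrow> 'b set \<Rightarrow> 'b set \<Rightarrow> 'b set" where
  "meet_in L x y = (THE z. is_glb_in L x y z)"

definition set_lattice :: "'b set set \<Rightarrow> bool" where
  "set_lattice L \<longleftrightarrow> (\<forall>x\<in>L. \<forall>y\<in>L. (\<exists>z. is_lub_in L x y z) \<and> (\<exists>z. is_glb_in L x y z))"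

definition modular_lattice :: "'b set set \<Rightarrow> bool" where
  "modular_lattice L \<longleftrightarrow> set_lattice L \<and>
     (\<forall>x\<in>L. \<forall>y\<in>L. \<forall>z\<in>L. x \<subseteq> z \<longrightarrow>
        join_in L x (meet_in L y z) = meet_in L (join_in L x y) z)"

definition boolean_lattice :: "'b set set \<Rightarrow> bool" where
  "boolean_lattice L \<longleftrightarrow> set_lattice L \<and>
     (\<exists>bot\<in>L. \<exists>top\<in>L. (\<forall>x\<in>L. bot \<subseteq> x \<and> x \<subseteq> top) \<and>
        (\<forall>x\<in>L. \<exists>y\<in>L. join_in L x y = top \<and> meet_in L x y = bot)) \<and>
     (\<forall>x\<in>L. \<forall>y\<in>L. \<forall>z\<in>L.
        meet_in L x (join_in L y z) = join_in L (meet_in L x y) (meet_in L x z))"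

end

theory Submission
  imports Defs
begin

text \<open>In a commutative *-subalgebra V of a C*-algebra the C*-identity makes V reduced
(x * x = 0 forces x = 0), and commutativity turns the anticommutator condition of Ann into
a * s = 0. Annihilators are then ideals fixed by the double annihilator; meets are
intersections and joins are double annihilators of unions. Reducedness gives
A \<inter> Ann V A = {0}, so Ann V A complements A, and distributivity follows since
w * u is square-zero whenever w lies in X \<inter> (Y \<squnion> Z) and u annihilates
(X \<inter> Y) \<union> (X \<inter> Z). A Boolean algebra is in particular modular.\<close>

lemma join_in_eqI: "is_lub_in L x y z \<Longrightarrow> join_in L x y = z"
  unfolding join_in_def by (rule the_equality) (auto simp: is_lub_in_def)

lemma meet_in_eqI: "is_glb_in L x y z \<Longrightarrow> meet_in L x y = z"
  unfolding meet_in_def by (rule the_equality) (auto simp: is_glb_in_def)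

lemma is_glb_in_meet_in:
  assumes "set_lattice L" "x \<in> L" "y \<in> L"
  shows "is_glb_in L x y (meet_in L x y)"
proof -
  obtain z where "is_glb_in L x y z" using assms unfolding set_lattice_def by blast
  then show ?thesis by (simp add: meet_in_eqI)
qed

lemma meet_in_commute:
  assumes "set_lattice L" "x \<in> L" "y \<in> L"
  shows "meet_in L x y = meet_in L y x"
  using is_glb_in_meet_in[OF assms] by (intro meet_in_eqI[symmetric]) (auto simp: is_glb_in_def)

lemma meet_in_absorb:
  assumes "x \<in> L" "x \<subseteq> z"
  shows "meet_in L z x = x"
  using assms by (intro meet_in_eqI) (auto simp: is_glb_in_def)

lemma modular_lattice_if_distrib:
  assumes lat: "set_lattice L"
    and distrib: "\<And>x y z. x \<in> L \<Longrightarrow> y \<in> L \<Longrightarrow> z \<in> L \<Longrightarrow>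
      meet_in L x (join_in L y z) = join_in L (meet_in L x y) (meet_in L x z)"
  shows "modular_lattice L"
  unfolding modular_lattice_def
proof (intro conjI ballI impI lat)
  fix x y z assume L: "x \<in> L" "y \<in> L" "z \<in> L" and "x \<subseteq> z"
  have xy: "join_in L x y \<in> L"
    using L lat unfolding set_lattice_def by (metis is_lub_in_def join_in_eqI)
  have "meet_in L (join_in L x y) z = meet_in L z (join_in L x y)"
    using lat xy L by (simp add: meet_in_commute)
  also have "\<dots> = join_in L (meet_in L z x) (meet_in L z y)"
    using distrib L by blast
  also have "\<dots> = join_in L x (meet_in L y z)"
    using \<open>x \<subseteq> z\<close> L lat by (simp add: meet_in_absorb meet_in_commute)
  finally show "join_in L x (meet_in L y z) = meet_in L (join_in L x y) z" ..
qed

lemma modular_lattice_if_boolean_lattice: "boolean_lattice L \<Longrightarrow> modular_lattice L"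
  unfolding boolean_lattice_def by (intro modular_lattice_if_distrib) simp_all

lemma double_eq_zero_imp_eq_zero: "(y::'a::real_vector) + y = 0 \<Longrightarrow> y = 0"
  by (metis scaleR_2 scaleR_eq_0_iff zero_neq_numeral)

lemma adj_mult_self_eq_zero_iff: "adj x * x = 0 \<longleftrightarrow> x = (0::'a::cstar_algebra)"
  using cstar_identity[of x] by auto

locale commutative_star_subalgebra =
  fixes V :: "'a::cstar_algebra set"
  assumes zero_mem: "0 \<in> V"
    and mult_mem: "\<And>x y. x \<in> V \<Longrightarrow> y \<in> V \<Longrightarrow> x * y \<in> V"
    and adj_mem: "\<And>x. x \<in> V \<Longrightarrow> adj x \<in> V"
    and mult_commute: "\<And>x y. x \<in> V \<Longrightarrow> y \<in> V \<Longrightarrow> x * y = y * x"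
begin

lemma mult_self_eq_zero_iff:
  assumes x: "x \<in> V"
  shows "x * x = 0 \<longleftrightarrow> x = 0"
proof
  assume xx: "x * x = 0"
  define h where "h = adj x * x"
  have "adj h * h = adj x * (x * adj x) * x"
    unfolding h_def by (simp add: adj_mult adj_adj mult.assoc)
  also have "\<dots> = adj x * adj x * (x * x)"
    using mult_commute[OF x adj_mem[OF x]] by (simp add: mult.assoc)
  finally have "h = 0" using xx by (simp add: adj_mult_self_eq_zero_iff)
  then show "x = 0" unfolding h_def by (simp add: adj_mult_self_eq_zero_iff)
qed simp

lemma Ann_eq: "S \<subseteq> V \<Longrightarrow> Ann V S = {a \<in> V. \<forall>s\<in>S. a * s = 0}"
  unfolding Ann_def
  by (auto simp: subset_iff mult_commute intro: double_eq_zero_imp_eq_zero)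

lemma Ann_subset: "Ann V S \<subseteq> V"
  unfolding Ann_def by auto

lemma Ann_antimono: "S \<subseteq> T \<Longrightarrow> Ann V T \<subseteq> Ann V S"
  unfolding Ann_def by auto

lemma subset_Ann_Ann: "S \<subseteq> V \<Longrightarrow> S \<subseteq> Ann V (Ann V S)"
  unfolding Ann_def by (auto simp: add.commute)

lemma Ann_Ann_Ann: "S \<subseteq> V \<Longrightarrow> Ann V (Ann V (Ann V S)) = Ann V S"
  by (meson Ann_subset Ann_antimono subset_Ann_Ann subset_antisym)

lemma mult_eq_zero_iff_mult_adj_self:
  assumes a: "a \<in> V" and s: "s \<in> V"
  shows "a * s = 0 \<longleftrightarrow> a * (adj s * s) = 0"
proof
  assume "a * s = 0"
  moreover have "a * (adj s * s) = adj s * (a * s)"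
    by (metis mult.assoc mult_commute[OF a adj_mem[OF s]])
  ultimately show "a * (adj s * s) = 0" by simp
next
  assume z: "a * (adj s * s) = 0"
  have "adj (a * s) * (a * s) = adj a * (adj s * a) * s"
    by (simp add: adj_mult mult.assoc mult_commute[OF adj_mem[OF s] adj_mem[OF a]])
  also have "adj s * a = a * adj s"
    by (rule mult_commute[OF adj_mem[OF s] a])
  finally have "adj (a * s) * (a * s) = adj a * (a * (adj s * s))"
    by (simp add: mult.assoc)
  then show "a * s = 0" using z by (simp add: adj_mult_self_eq_zero_iff)
qed

lemma Ann_eq_Ann_pos:
  assumes "S \<subseteq> V"
  shows "Ann V S = Ann V {adj s * s | s. s \<in> S}"
proof -
  have "{adj s * s | s. s \<in> S} \<subseteq> V" using assms adj_mem mult_mem by blast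
  with assms show ?thesis
    by (auto simp: Ann_eq subset_iff mult_eq_zero_iff_mult_adj_self)
qed

lemma annihilators_iff: "A \<in> annihilators V \<longleftrightarrow> A \<subseteq> V \<and> Ann V (Ann V A) = A"
proof
  assume "A \<in> annihilators V"
  then obtain S where "A = Ann V (Ann V S)"
    unfolding annihilators_def by blast
  then show "A \<subseteq> V \<and> Ann V (Ann V A) = A"
    using Ann_subset Ann_Ann_Ann[OF Ann_subset] by simp
next
  assume A: "A \<subseteq> V \<and> Ann V (Ann V A) = A"
  then have "A = Ann V (Ann V {adj s * s | s. s \<in> A})"
    using Ann_eq_Ann_pos[of A] by simp
  moreover have "{adj s * s | s. s \<in> A} \<subseteq> pos_part V"
    using A unfolding pos_part_def by blast
  ultimately show "A \<in> annihilators V" unfolding annihilators_def by blast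
qed

lemma Ann_in_annihilators: "S \<subseteq> V \<Longrightarrow> Ann V S \<in> annihilators V"
  using annihilators_iff Ann_Ann_Ann Ann_subset by blast

lemma annihilators_mult_left:
  assumes A: "A \<in> annihilators V" and a: "a \<in> A" and v: "v \<in> V"
  shows "v * a \<in> A"
proof -
  have AV: "A \<subseteq> V" and AA: "Ann V (Ann V A) = A" using A annihilators_iff by auto
  have "a \<in> Ann V (Ann V A)" using a AA by simp
  then have "v * a \<in> Ann V (Ann V A)"
    using v AV Ann_subset mult_mem by (auto simp: Ann_eq mult.assoc)
  then show ?thesis using AA by simp
qed

lemma annihilators_mult_right:
  "A \<in> annihilators V \<Longrightarrow> a \<in> A \<Longrightarrow> v \<in> V \<Longrightarrow> a * v \<in> A"
  using annihilators_mult_left annihilators_iff mult_commute by (metis subsetD)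

lemma Int_Ann_self: "A \<subseteq> V \<Longrightarrow> A \<inter> Ann V A \<subseteq> {0}"
  by (auto simp: Ann_eq mult_self_eq_zero_iff)

lemma Ann_self: "Ann V V = {0}"
  using Int_Ann_self[of V] zero_mem by (auto simp: Ann_eq)

lemma zero_mem_annihilators:
  assumes "A \<in> annihilators V"
  shows "0 \<in> A"
proof -
  have "Ann V V \<subseteq> Ann V (Ann V A)" by (rule Ann_antimono[OF Ann_subset])
  then show ?thesis using assms annihilators_iff Ann_self by auto
qed

lemma is_glb_annihilators:
  assumes A: "A \<in> annihilators V" and B: "B \<in> annihilators V"
  shows "is_glb_in (annihilators V) A B (A \<inter> B)"
proof -
  have "Ann V (Ann V (A \<inter> B)) \<subseteq> Ann V (Ann V A) \<inter> Ann V (Ann V B)"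
    by (intro Int_greatest Ann_antimono) auto
  moreover have "A \<inter> B \<subseteq> Ann V (Ann V (A \<inter> B))" "A \<inter> B \<subseteq> V"
    using A subset_Ann_Ann[of "A \<inter> B"] annihilators_iff by auto
  ultimately have "A \<inter> B \<in> annihilators V"
    using A B annihilators_iff by auto
  then show ?thesis unfolding is_glb_in_def by auto
qed

lemma is_lub_annihilators:
  assumes A: "A \<in> annihilators V" and B: "B \<in> annihilators V"
  shows "is_lub_in (annihilators V) A B (Ann V (Ann V (A \<union> B)))"
  unfolding is_lub_in_def
proof (intro conjI ballI impI)
  have AB: "A \<union> B \<subseteq> V" using A B annihilators_iff by blast
  show "Ann V (Ann V (A \<union> B)) \<in> annihilators V" using Ann_in_annihilators Ann_subset by blast
  show "A \<subseteq> Ann V (Ann V (A \<union> B))" "B \<subseteq> Ann V (Ann V (A \<union> B))"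
    using subset_Ann_Ann[OF AB] by auto
  fix W assume W: "W \<in> annihilators V" and "A \<subseteq> W \<and> B \<subseteq> W"
  then have "Ann V (Ann V (A \<union> B)) \<subseteq> Ann V (Ann V W)" by (intro Ann_antimono) auto
  then show "Ann V (Ann V (A \<union> B)) \<subseteq> W" using W annihilators_iff by simp
qed

lemma join_annihilators:
  "A \<in> annihilators V \<Longrightarrow> B \<in> annihilators V \<Longrightarrow>
    join_in (annihilators V) A B = Ann V (Ann V (A \<union> B))"
  by (rule join_in_eqI) (rule is_lub_annihilators)

lemma meet_annihilators:
  "A \<in> annihilators V \<Longrightarrow> B \<in> annihilators V \<Longrightarrow> meet_in (annihilators V) A B = A \<inter> B"
  by (rule meet_in_eqI) (rule is_glb_annihilators)

lemma set_lattice_annihilators: "set_lattice (annihilators V)"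
  unfolding set_lattice_def using is_lub_annihilators is_glb_annihilators by blast

lemma annihilators_distrib:
  assumes X: "X \<in> annihilators V" and Y: "Y \<in> annihilators V" and Z: "Z \<in> annihilators V"
  shows "X \<inter> Ann V (Ann V (Y \<union> Z)) = Ann V (Ann V ((X \<inter> Y) \<union> (X \<inter> Z)))"
proof
  have XV: "X \<subseteq> V" and YZ: "Y \<union> Z \<subseteq> V" using X Y Z annihilators_iff by auto
  let ?T = "(X \<inter> Y) \<union> (X \<inter> Z)"
  have TV: "?T \<subseteq> V" using XV by blast
  show "X \<inter> Ann V (Ann V (Y \<union> Z)) \<subseteq> Ann V (Ann V ?T)"
  proof
    fix w assume w: "w \<in> X \<inter> Ann V (Ann V (Y \<union> Z))"
    have wV: "w \<in> V" using w XV by blast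
    have "w * u = 0" if u: "u \<in> Ann V ?T" for u
    proof -
      have uV: "u \<in> V" using u Ann_subset by blast
      have "w * b \<in> ?T" if "b \<in> Y \<union> Z" for b
        \<comment> \<open>X, Y and Z are ideals of V\<close>
        using that w wV X Y Z YZ annihilators_mult_left annihilators_mult_right by blast
      then have "u * w \<in> Ann V (Y \<union> Z)"
        using u uV wV YZ TV mult_mem by (auto simp: Ann_eq mult.assoc)
      then have "w * (u * w) = 0"
        using w YZ Ann_subset by (auto simp: Ann_eq)
      then have "(w * u) * (w * u) = 0" by (metis mult.assoc mult_zero_left)
      then show "w * u = 0" using mult_self_eq_zero_iff mult_mem[OF wV uV] by blast
    qed
    then show "w \<in> Ann V (Ann V ?T)" using wV Ann_subset by (auto simp: Ann_eq)
  qed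
next
  have YZ: "Y \<union> Z \<subseteq> V" using Y Z annihilators_iff by auto
  have "X \<inter> Ann V (Ann V (Y \<union> Z)) \<in> annihilators V"
    using is_glb_annihilators[OF X Ann_in_annihilators[OF Ann_subset]]
    unfolding is_glb_in_def by blast
  moreover have "(X \<inter> Y) \<union> (X \<inter> Z) \<subseteq> X \<inter> Ann V (Ann V (Y \<union> Z))"
    using subset_Ann_Ann[OF YZ] by blast
  ultimately show "Ann V (Ann V ((X \<inter> Y) \<union> (X \<inter> Z))) \<subseteq> X \<inter> Ann V (Ann V (Y \<union> Z))"
    using Ann_antimono[THEN Ann_antimono] annihilators_iff by metis
qed

lemma Ann_is_complement:
  assumes A: "A \<in> annihilators V"
  shows "join_in (annihilators V) A (Ann V A) = V"
    and "meet_in (annihilators V) A (Ann V A) = {0}"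
proof -
  have AV: "A \<subseteq> V" and AA: "Ann V (Ann V A) = A" using A annihilators_iff by auto
  have AnnA: "Ann V A \<in> annihilators V" using Ann_in_annihilators[OF AV] .
  have "Ann V (A \<union> Ann V A) \<subseteq> Ann V (Ann V A) \<inter> Ann V A"
    by (intro Int_greatest Ann_antimono) auto
  then have "Ann V (A \<union> Ann V A) \<subseteq> {0}" using Int_Ann_self[OF AV] AA by blast
  then have "V \<subseteq> Ann V (Ann V (A \<union> Ann V A))"
    using AV Ann_subset by (auto simp: Ann_eq)
  then show "join_in (annihilators V) A (Ann V A) = V"
    using join_annihilators[OF A AnnA] Ann_subset by blast
  have "A \<inter> Ann V A = {0}"
    using Int_Ann_self[OF AV] zero_mem_annihilators[OF A] zero_mem_annihilators[OF AnnA] by blast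
  then show "meet_in (annihilators V) A (Ann V A) = {0}"
    using meet_annihilators[OF A AnnA] by simp
qed

lemma boolean_lattice_annihilators: "boolean_lattice (annihilators V)"
proof -
  let ?P = "annihilators V"
  have top: "V \<in> ?P"
    unfolding annihilators_iff by (meson Ann_subset subset_Ann_Ann subset_antisym order_refl)
  have bot: "{0} \<in> ?P"
    using Ann_in_annihilators[of V] by (simp add: Ann_self)
  have bounds: "\<forall>A\<in>?P. {0} \<subseteq> A \<and> A \<subseteq> V"
  proof
    fix A assume "A \<in> ?P"
    then show "{0} \<subseteq> A \<and> A \<subseteq> V"
      using zero_mem_annihilators annihilators_iff by simp
  qed
  have complements: "\<forall>A\<in>?P. \<exists>B\<in>?P. join_in ?P A B = V \<and> meet_in ?P A B = {0}"
  proof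
    fix A assume A: "A \<in> ?P"
    then have "Ann V A \<in> ?P" using Ann_in_annihilators annihilators_iff by simp
    with Ann_is_complement[OF A] show "\<exists>B\<in>?P. join_in ?P A B = V \<and> meet_in ?P A B = {0}"
      by blast
  qed
  have distrib: "meet_in ?P X (join_in ?P Y Z) = join_in ?P (meet_in ?P X Y) (meet_in ?P X Z)"
    if X: "X \<in> ?P" and Y: "Y \<in> ?P" and Z: "Z \<in> ?P" for X Y Z
  proof -
    have "Ann V (Ann V (Y \<union> Z)) \<in> ?P" using Ann_in_annihilators Ann_subset by blast
    moreover have "X \<inter> Y \<in> ?P" "X \<inter> Z \<in> ?P"
      using is_glb_annihilators[OF X Y] is_glb_annihilators[OF X Z] unfolding is_glb_in_def by auto
    ultimately show ?thesis
      using X Y Z by (simp add: join_annihilators meet_annihilators annihilators_distrib)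
  qed
  show ?thesis
    unfolding boolean_lattice_def
    by (intro conjI set_lattice_annihilators bexI[OF _ bot] bexI[OF _ top] bounds complements
        ballI distrib)
qed

end

lemma commutative_star_subalgebra_if_abelian_annihilator:
  "abelian_annihilator V \<Longrightarrow> commutative_star_subalgebra V"
  unfolding abelian_annihilator_def cstar_subalgebra_def commutative_star_subalgebra_def
  by blast

theorem lemma14:
  fixes V :: "'a::cstar_algebra set"
  assumes "abelian_annihilator V"
  shows "boolean_lattice (annihilators V)
    \<and> (\<forall>W::'a set. abelian_annihilator W \<longrightarrow> modular_lattice (annihilators W))"
proof (intro conjI allI impI)
  show "boolean_lattice (annihilators V)"
    using assms by (intro commutative_star_subalgebra.boolean_lattice_annihilators
        commutative_star_subalgebra_if_abelian_annihilator)
  fix W :: "'a set"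
  assume "abelian_annihilator W"
  then show "modular_lattice (annihilators W)"
    by (intro modular_lattice_if_boolean_lattice commutative_star_subalgebra.boolean_lattice_annihilators
        commutative_star_subalgebra_if_abelian_annihilator)
qed

end
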